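(* Let $k>0$, $d>0$, $a>0$. There exists $\Lambda>0$ such that for every $\lambda\in\mathbb{R}$ with $|\lambda|>\Lambda$ there is no $\mu\in\mathbb{C}$ with $\mathrm{Re}\,\mu\ge0$ satisfying $$\frac12\int_{-1}^{1}\frac{1-k+\mathrm{i}\,\frac{a\lambda s}{1+d\lambda^2}}{1+k\mu+\mathrm{i}k\lambda s}\,ds=1 .$$ In other words, the linearized system (L) has no non-decaying Fourier modes at high frequency: the set of wave numbers that carry unstable modes is bounded.
   Context: Let $S^2\subset\mathbb{R}^3$ be the unit sphere, with surface measure $d\Omega$ (total mass $4\pi$). Write $\mathbf{v}=(v_1,v_2,v_3)\in S^2$ and $x\in\mathbb{R}$. Fix parameters $k>0$, $d>0$, and $a=F'(0)>0$. The linearized system (L), for the unknowns $g(x,\mathbf v)$ and $S_g(x)$ and a growth rate $\mu\in\mathbb{C}$, is $$k(\mu g+v_1\partial_x g)=\rho_g+a\,v_1\partial_x S_g-g-k\rho_g,\qquad -d\,\partial_{xx}S_g+S_g=\rho_g,\qquad \rho_g=\frac1{4\pi}\int_{S^2}g\,d\Omega .$$ A nonzero solution of (L) of the form $g=\hat g(\mathbf v)e^{\mathrm{i}\lambda x}$ with growth rate $\mu$ (where $\mathrm{Re}\,\mu>-1/k$) exists exactly when $\mu$ satisfies the displayed dispersion relation. *)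

theory Defs
  imports "HOL-Analysis.Analysis"
begin

definition dispersion :: "real \<Rightarrow> real \<Rightarrow> real \<Rightarrow> real \<Rightarrow> complex \<Rightarrow> complex" where
  "dispersion k d a lam mu =
     (1/2) * integral {-1..1::real}
       (\<lambda>s. (complex_of_real (1 - k) + \<i> * complex_of_real (a * lam * s / (1 + d * lam\<^sup>2)))
            / (1 + complex_of_real k * mu + \<i> * complex_of_real (k * lam * s)))"

end

theory Submission
  imports Defs
begin

text \<open>Write the integrand as \<open>(1 - k + \<i> b s) / (A + \<i> w(s))\<close> with \<open>A = 1 + k Re \<mu> \<ge> 1\<close> and
  \<open>w(s) = k Im \<mu> + k \<lambda> s\<close>. Its real part is at most \<open>|1 - k| A / (A\<^sup>2 + w(s)\<^sup>2) + |b|\<close>, and the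
  first term integrates to a difference of arctangents divided by \<open>k \<lambda>\<close>. Hence
  \<open>Re (dispersion) \<le> (|1 - k| \<pi> / (k |\<lambda>|) + 2 |b|) / 2\<close> with \<open>b = a \<lambda> / (1 + d \<lambda>\<^sup>2)\<close>,
  and both terms are \<open>O(1/|\<lambda>|)\<close>, so the dispersion relation fails for large \<open>|\<lambda>|\<close>.\<close>

lemma Re_Complex_divide_le:
  fixes p q A w B :: real
  assumes A: "A \<ge> 1" and q: "\<bar>q\<bar> \<le> B"
  shows "Re (Complex p q / Complex A w) \<le> \<bar>p\<bar> * (A / (A\<^sup>2 + w\<^sup>2)) + B"
proof -
  have pos: "A\<^sup>2 + w\<^sup>2 > 0"
    using A by (simp add: add_pos_nonneg)
  have "\<bar>w\<bar> \<le> A\<^sup>2 + w\<^sup>2"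
  proof -
    have "0 \<le> (\<bar>w\<bar> - 1)\<^sup>2" and "1 \<le> A\<^sup>2"
      using A by (simp_all add: one_le_power)
    then show ?thesis
      by (simp add: power2_eq_square algebra_simps)
  qed
  then have "q * w \<le> B * (A\<^sup>2 + w\<^sup>2)"
  proof -
    have "q * w \<le> \<bar>q\<bar> * \<bar>w\<bar>"
      by (metis abs_ge_self abs_mult)
    also have "\<dots> \<le> B * (A\<^sup>2 + w\<^sup>2)"
      using q \<open>\<bar>w\<bar> \<le> A\<^sup>2 + w\<^sup>2\<close> by (intro mult_mono) auto
    finally show ?thesis .
  qed
  moreover have "p * A \<le> \<bar>p\<bar> * A"
    using A by (simp add: mult_right_mono)
  ultimately have "(p * A + q * w) / (A\<^sup>2 + w\<^sup>2) \<le> (\<bar>p\<bar> * A + B * (A\<^sup>2 + w\<^sup>2)) / (A\<^sup>2 + w\<^sup>2)"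
    using pos by (intro divide_right_mono) auto
  then have "Re (Complex p q / Complex A w) \<le> (\<bar>p\<bar> * A + B * (A\<^sup>2 + w\<^sup>2)) / (A\<^sup>2 + w\<^sup>2)"
    by (simp add: Complex_divide power2_eq_square add_divide_distrib)
  also have "\<dots> = \<bar>p\<bar> * (A / (A\<^sup>2 + w\<^sup>2)) + B"
    using pos by (auto simp: add_divide_distrib)
  finally show ?thesis .
qed

lemma has_integral_arctan_kernel:
  fixes A c x :: real
  assumes A: "A > 0" and c: "c \<noteq> 0"
  shows "((\<lambda>s. A / (A\<^sup>2 + (x + c * s)\<^sup>2)) has_integral
           (arctan ((x + c) / A) - arctan ((x - c) / A)) / c) {-1..1}"
proof -
  have "((\<lambda>s. arctan ((x + c * s) / A) / c) has_vector_derivative A / (A\<^sup>2 + (x + c * s)\<^sup>2))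
          (at s within {-1..1})" for s
  proof -
    have "((\<lambda>s. arctan ((x + c * s) / A) / c) has_real_derivative
            inverse (1 + ((x + c * s) / A)\<^sup>2) * (c / A) / c) (at s within {-1..1})"
      using A c by (auto intro!: derivative_eq_intros)
    moreover have "inverse (1 + ((x + c * s) / A)\<^sup>2) * (c / A) / c = A / (A\<^sup>2 + (x + c * s)\<^sup>2)"
    proof -
      have "1 + ((x + c * s) / A)\<^sup>2 = (A\<^sup>2 + (x + c * s)\<^sup>2) / A\<^sup>2"
        using A by (simp add: field_simps)
      then show ?thesis
        using A c by (simp add: power2_eq_square)
    qed
    ultimately show ?thesis
      by (simp add: has_real_derivative_iff_has_vector_derivative)
  qed
  then have "((\<lambda>s. A / (A\<^sup>2 + (x + c * s)\<^sup>2)) has_integral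
               arctan ((x + c * 1) / A) / c - arctan ((x + c * -1) / A) / c) {-1..1}"
    by (intro fundamental_theorem_of_calculus) auto
  then show ?thesis
    by (simp add: diff_divide_distrib)
qed

lemma arctan_diff_divide_le:
  fixes u v c :: real
  shows "(arctan u - arctan v) / c \<le> pi / \<bar>c\<bar>"
proof -
  have "\<bar>arctan u - arctan v\<bar> \<le> pi"
    using arctan_bounded[of u] arctan_bounded[of v] by linarith
  then have "\<bar>(arctan u - arctan v) / c\<bar> \<le> pi / \<bar>c\<bar>"
    unfolding abs_divide by (intro divide_right_mono) auto
  then show ?thesis
    by linarith
qed

lemma Re_dispersion_le:
  fixes k d a lam :: real and mu :: complex
  assumes k: "k > 0" and d: "d > 0" and lam: "lam \<noteq> 0" and mu: "Re mu \<ge> 0"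
  shows "Re (dispersion k d a lam mu) \<le> (\<bar>1 - k\<bar> * pi / (k * \<bar>lam\<bar>) + 2 * \<bar>a * lam / (1 + d * lam\<^sup>2)\<bar>) / 2"
proof -
  define A where "A = 1 + k * Re mu"
  define b where "b = a * lam / (1 + d * lam\<^sup>2)"
  define w where "w s = k * Im mu + k * lam * s" for s
  define f where "f s = (complex_of_real (1 - k) + \<i> * complex_of_real (a * lam * s / (1 + d * lam\<^sup>2)))
                        / (1 + complex_of_real k * mu + \<i> * complex_of_real (k * lam * s))" for s
  have A: "A \<ge> 1"
    using k mu by (simp add: A_def)
  have f_eq: "f s = Complex (1 - k) (b * s) / Complex A (w s)" for s
  proof -
    have "complex_of_real (1 - k) + \<i> * complex_of_real (a * lam * s / (1 + d * lam\<^sup>2)) = Complex (1 - k) (b * s)"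
      by (simp add: complex_eq_iff b_def)
    moreover have "1 + complex_of_real k * mu + \<i> * complex_of_real (k * lam * s) = Complex A (w s)"
      by (simp add: complex_eq_iff A_def w_def)
    ultimately show ?thesis
      by (simp add: f_def)
  qed
  have "1 + complex_of_real k * mu + \<i> * complex_of_real (k * lam * s) \<noteq> 0" for s
    using A by (auto simp: complex_eq_iff A_def)
  moreover have "1 + d * lam\<^sup>2 > 0"
    using d by (simp add: add_pos_nonneg)
  ultimately have "continuous_on {-1..1} f"
    unfolding f_def by (intro continuous_intros) auto
  then have Re_f: "((\<lambda>s. Re (f s)) has_integral Re (integral {-1..1} f)) {-1..1}"
    by (intro has_integral_Re integrable_integral integrable_continuous_interval)
  define J where "J = (arctan ((k * Im mu + k * lam) / A) - arctan ((k * Im mu - k * lam) / A)) / (k * lam)"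
  have "((\<lambda>s. A / (A\<^sup>2 + (w s)\<^sup>2)) has_integral J) {-1..1}"
    unfolding w_def J_def using A k lam by (intro has_integral_arctan_kernel) auto
  then have "((\<lambda>s. \<bar>1 - k\<bar> * (A / (A\<^sup>2 + (w s)\<^sup>2)) + \<bar>b\<bar>) has_integral \<bar>1 - k\<bar> * J + 2 * \<bar>b\<bar>) {-1..1}"
    using has_integral_const_real[of "\<bar>b\<bar>" "-1" 1] by (intro has_integral_add has_integral_mult_right) auto
  moreover have "Re (f s) \<le> \<bar>1 - k\<bar> * (A / (A\<^sup>2 + (w s)\<^sup>2)) + \<bar>b\<bar>" if "s \<in> {-1..1}" for s
    unfolding f_eq using A that by (intro Re_Complex_divide_le) (auto simp: abs_mult mult_left_le)
  ultimately have "Re (integral {-1..1} f) \<le> \<bar>1 - k\<bar> * J + 2 * \<bar>b\<bar>"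
    by (rule has_integral_le[OF Re_f])
  moreover have "\<bar>1 - k\<bar> * J \<le> \<bar>1 - k\<bar> * (pi / (k * \<bar>lam\<bar>))"
    unfolding J_def using arctan_diff_divide_le[of _ _ "k * lam"] k
    by (intro mult_left_mono) (auto simp: abs_mult)
  ultimately have "Re (integral {-1..1} f) \<le> \<bar>1 - k\<bar> * (pi / (k * \<bar>lam\<bar>)) + 2 * \<bar>b\<bar>"
    by linarith
  moreover have "Re (dispersion k d a lam mu) = Re (integral {-1..1} f) / 2"
    unfolding dispersion_def f_def[abs_def] by simp
  ultimately show ?thesis
    by (simp add: b_def)
qed

lemma abs_divide_one_plus_sq_le:
  fixes a d lam :: real
  assumes "a \<ge> 0" and "d > 0" and "lam \<noteq> 0"
  shows "\<bar>a * lam / (1 + d * lam\<^sup>2)\<bar> \<le> a / (d * \<bar>lam\<bar>)"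
proof -
  have dl: "d * lam\<^sup>2 > 0"
    using assms by simp
  have "\<bar>a * lam / (1 + d * lam\<^sup>2)\<bar> = a * \<bar>lam\<bar> / (1 + d * lam\<^sup>2)"
    using assms dl by (simp add: abs_mult)
  also have "\<dots> \<le> a * \<bar>lam\<bar> / (d * lam\<^sup>2)"
    using assms dl by (intro divide_left_mono) (auto intro!: mult_pos_pos add_pos_pos)
  also have "\<dots> = a / (d * \<bar>lam\<bar>)"
    using assms by (simp add: power2_eq_square field_simps)
  finally show ?thesis .
qed

theorem mainTheorem3:
  fixes k d a :: real
  assumes "k > 0" and "d > 0" and "a > 0"
  shows "\<exists>\<Lambda>>0. \<forall>lam::real. \<bar>lam\<bar> > \<Lambda> \<longrightarrow>
           \<not> (\<exists>mu::complex. Re mu \<ge> 0 \<and> dispersion k d a lam mu = 1)"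
proof -
  define \<Lambda> where "\<Lambda> = (\<bar>1 - k\<bar> * pi / k + 2 * a / d) / 2"
  have "\<Lambda> > 0"
    using assms by (simp add: \<Lambda>_def add_nonneg_pos)
  moreover have "\<not> (\<exists>mu. Re mu \<ge> 0 \<and> dispersion k d a lam mu = 1)" if lam: "\<bar>lam\<bar> > \<Lambda>" for lam
  proof
    assume "\<exists>mu. Re mu \<ge> 0 \<and> dispersion k d a lam mu = 1"
    then obtain mu where "Re mu \<ge> 0" and "dispersion k d a lam mu = 1"
      by blast
    moreover have "lam \<noteq> 0"
      using lam \<open>\<Lambda> > 0\<close> by auto
    ultimately have "1 \<le> (\<bar>1 - k\<bar> * pi / (k * \<bar>lam\<bar>) + 2 * \<bar>a * lam / (1 + d * lam\<^sup>2)\<bar>) / 2"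
      using Re_dispersion_le[of k d lam mu a] assms by simp
    also have "\<dots> \<le> (\<bar>1 - k\<bar> * pi / (k * \<bar>lam\<bar>) + 2 * (a / (d * \<bar>lam\<bar>))) / 2"
      using abs_divide_one_plus_sq_le[of a d lam] assms \<open>lam \<noteq> 0\<close> by simp
    also have "\<dots> = \<Lambda> / \<bar>lam\<bar>"
      using assms \<open>lam \<noteq> 0\<close> by (simp add: \<Lambda>_def field_simps)
    also have "\<dots> < 1"
      using lam \<open>\<Lambda> > 0\<close> by simp
    finally show False
      by simp
  qed
  ultimately show ?thesis
    by blast
qed

end
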